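(* Let $n\ge 3$ be an integer and $a,b\in\mathbb{C}$ with $b\neq 0$. Let $A$ be the $n\times n$ tridiagonal matrix with all diagonal entries equal to $a$, all subdiagonal entries $A_{k+1,k}$ ($k=1,\dots,n-1$) equal to $b$, superdiagonal entries $A_{1,2}=A_{n-1,n}=2b$, and all other superdiagonal entries $A_{k,k+1}=b$ ($2\le k\le n-2$); all remaining entries are $0$. Then the eigenvalues of $A$ are $$\lambda_k=a+2b\cos\left(\frac{(k-1)\pi}{n-1}\right),\quad k=1,2,\dots,n,$$ and, writing $\delta_j=\frac{\lambda_j-a}{b}$, for each $j=1,\dots,n$ the vector $(x_{1j},\dots,x_{nj})^T$ with $$x_{kj}=T_{k-1}\left(\tfrac{\delta_j}{2}\right)\ (k=1,\dots,n-1),\qquad x_{nj}=\tfrac12 T_{n-1}\left(\tfrac{\delta_j}{2}\right)$$ is an eigenvector of $A$ corresponding to $\lambda_j$.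
   Context: $T_m(x)$ denotes the Chebyshev polynomial of the first kind: $T_0=1$, $T_1=x$, $T_{m+1}(x)=2xT_m(x)-T_{m-1}(x)$, equivalently $T_m(\cos\theta)=\cos(m\theta)$. *)

theory Defs
  imports Complex_Main "Jordan_Normal_Form.Char_Poly"
begin

fun cheb_T :: "nat \<Rightarrow> 'a :: comm_ring_1 \<Rightarrow> 'a" where
  "cheb_T 0 x = 1"
| "cheb_T (Suc 0) x = x"
| "cheb_T (Suc (Suc m)) x = 2 * x * cheb_T (Suc m) x - cheb_T m x"

text \<open>The n x n tridiagonal matrix of the statement, with 0-based indices:
  entry (i,j) of this matrix is the paper's entry A_{i+1,j+1}.\<close>
definition tri_mat :: "nat \<Rightarrow> complex \<Rightarrow> complex \<Rightarrow> complex mat" where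
  "tri_mat n a b = mat n n (\<lambda>(i, j).
     if i = j then a
     else if i = j + 1 then b
     else if j = i + 1 then (if i = 0 \<or> i = n - 2 then 2 * b else b)
     else 0)"

definition tri_lambda :: "nat \<Rightarrow> complex \<Rightarrow> complex \<Rightarrow> nat \<Rightarrow> complex" where
  "tri_lambda n a b k = a + 2 * b * complex_of_real (cos (real (k - 1) * pi / real (n - 1)))"

text \<open>Paper's eigenvector for lambda_j, as a 0-based vector: component i is x_{i+1,j}.\<close>
definition tri_evec :: "nat \<Rightarrow> complex \<Rightarrow> complex \<Rightarrow> nat \<Rightarrow> complex vec" where
  "tri_evec n a b j = (let d = (tri_lambda n a b j - a) / b in
     vec n (\<lambda>i. if i < n - 1 then cheb_T i (d / 2) else cheb_T (n - 1) (d / 2) / 2))"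

end

theory Submission
  imports Defs
begin

text \<open>For the vector \<open>x = (T\<^sub>0(c), \<dots>, T\<^sub>n\<^sub>-\<^sub>2(c), T\<^sub>n\<^sub>-\<^sub>1(c)/2)\<close>, the equation
  \<open>A x = (a + 2 b c) x\<close> reduces row by row to the Chebyshev recurrence, except that the last
  two rows (thanks to the halved last component) both become the boundary condition
  \<open>T\<^sub>n\<^sub>-\<^sub>2(c) = c T\<^sub>n\<^sub>-\<^sub>1(c)\<close>. For \<open>c = cos t\<close> this says \<open>cos ((n - 2) t) = cos t cos ((n - 1) t)\<close>,
  which holds whenever \<open>sin ((n - 1) t) = 0\<close>, in particular for the \<open>n\<close> angles
  \<open>t = (k - 1) \<pi> / (n - 1)\<close>. These give \<open>n\<close> distinct eigenvalues of an \<open>n \<times> n\<close> matrix,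
  which therefore are all the roots of its characteristic polynomial.\<close>

lemma cheb_T_of_real: "cheb_T m (of_real x) = of_real (cheb_T m x)"
  by (induction m x rule: cheb_T.induct) auto

lemma cheb_T_cos: "cheb_T m (cos t) = cos (real m * t)"
proof (induction m t rule: cheb_T.induct)
  case (3 m t)
  have "cos (real (Suc (Suc m)) * t) = cos (real (Suc m) * t + t)"
    "cos (real m * t) = cos (real (Suc m) * t - t)"
    by (simp_all add: algebra_simps)
  then show ?case using 3 by (simp add: cos_add cos_diff)
qed auto

lemma cheb_T_Suc: "i \<ge> 1 \<Longrightarrow> cheb_T (Suc i) x = 2 * x * cheb_T i x - cheb_T (i - 1) x"
  by (cases i) auto

lemma cheb_T_pred_cos:
  assumes "m \<ge> 1" and "sin (real m * t) = 0"
  shows "cheb_T (m - 1) (cos t) = cos t * cheb_T m (cos t)"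
proof -
  have "cos (real (m - 1) * t) = cos (real m * t - t)"
    using assms(1) by (simp add: of_nat_diff algebra_simps)
  then show ?thesis
    using assms(2) by (simp add: cheb_T_cos cos_diff)
qed

definition cheb_vec :: "nat \<Rightarrow> complex \<Rightarrow> complex vec" where
  "cheb_vec n c = vec n (\<lambda>i. if i < n - 1 then cheb_T i c else cheb_T (n - 1) c / 2)"

lemma tri_mat_carrier: "tri_mat n a b \<in> carrier_mat n n"
  unfolding tri_mat_def by simp

lemma tri_mat_mult_vec_nth:
  assumes i: "i < n" and v: "dim_vec v = n"
  shows "(tri_mat n a b *\<^sub>v v) $ i = a * v $ i + (if i \<ge> 1 then b * v $ (i - 1) else 0)
     + (if i + 1 < n then (if i = 0 \<or> i = n - 2 then 2 * b else b) * v $ (i + 1) else 0)"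
proof -
  let ?u = "if i = 0 \<or> i = n - 2 then 2 * b else b"
  have "(tri_mat n a b *\<^sub>v v) $ i = (\<Sum>k<n. (if k = i then a * v $ k else 0)
      + (if k = i - 1 \<and> i \<ge> 1 then b * v $ k else 0)
      + (if k = i + 1 then ?u * v $ k else 0))"
    unfolding tri_mat_def mult_mat_vec_def scalar_prod_def using i v
    by (auto simp: lessThan_atLeast0 intro!: sum.cong)
  also have "\<dots> = a * v $ i + (if i \<ge> 1 then b * v $ (i - 1) else 0)
      + (if i + 1 < n then ?u * v $ (i + 1) else 0)"
    using i by (cases "i \<ge> 1") (simp_all add: sum.distrib sum.delta')
  finally show ?thesis .
qed

lemma tri_mat_mult_cheb_vec:
  assumes n: "n \<ge> 3" and boundary: "cheb_T (n - 2) c = c * cheb_T (n - 1) c"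
  shows "tri_mat n a b *\<^sub>v cheb_vec n c = (a + 2 * b * c) \<cdot>\<^sub>v cheb_vec n c"
proof (rule eq_vecI)
  let ?x = "cheb_vec n c"
  have x: "dim_vec ?x = n" unfolding cheb_vec_def by simp
  then show "dim_vec (tri_mat n a b *\<^sub>v ?x) = dim_vec ((a + 2 * b * c) \<cdot>\<^sub>v ?x)"
    by (simp add: tri_mat_def)
  fix i assume "i < dim_vec ((a + 2 * b * c) \<cdot>\<^sub>v ?x)"
  then have i: "i < n" using x by simp
  have lhs: "(tri_mat n a b *\<^sub>v ?x) $ i = a * ?x $ i + (if i \<ge> 1 then b * ?x $ (i - 1) else 0)
     + (if i + 1 < n then (if i = 0 \<or> i = n - 2 then 2 * b else b) * ?x $ (i + 1) else 0)"
    by (rule tri_mat_mult_vec_nth[OF i x])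
  have rhs: "((a + 2 * b * c) \<cdot>\<^sub>v ?x) $ i = (a + 2 * b * c) * ?x $ i"
    using i x by simp
  consider "i = 0" | "1 \<le> i" "i < n - 2" | "i = n - 2" | "i = n - 1"
    using i n by linarith
  then show "(tri_mat n a b *\<^sub>v ?x) $ i = ((a + 2 * b * c) \<cdot>\<^sub>v ?x) $ i"
  proof cases
    case 1
    then have x_nth: "?x $ (i + 1) = c" "?x $ i = 1"
      using n by (auto simp: cheb_vec_def)
    with 1 n show ?thesis unfolding lhs rhs x_nth by (simp add: algebra_simps)
  next
    case 2
    then have x_nth: "?x $ (i + 1) = cheb_T (Suc i) c" "?x $ i = cheb_T i c"
      "?x $ (i - 1) = cheb_T (i - 1) c"
      by (auto simp: cheb_vec_def)
    with 2 show ?thesis unfolding lhs rhs x_nth by (simp add: cheb_T_Suc algebra_simps)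
  next
    case 3
    then have x_nth: "?x $ (i + 1) = cheb_T (Suc i) c / 2" "?x $ i = cheb_T i c"
      "?x $ (i - 1) = cheb_T (i - 1) c"
      using n by (auto simp: cheb_vec_def Suc_diff_Suc numeral_2_eq_2)
    have "Suc i < n" "1 \<le> i" using 3 n by auto
    with 3 show ?thesis unfolding lhs rhs x_nth by (simp add: cheb_T_Suc field_simps)
  next
    case 4
    then have x_nth: "?x $ i = cheb_T (n - 1) c / 2" "?x $ (i - 1) = cheb_T (n - 2) c"
      using n by (auto simp: cheb_vec_def numeral_2_eq_2)
    with 4 n show ?thesis unfolding lhs rhs x_nth by (simp add: boundary algebra_simps)
  qed
qed

lemma eigenvector_tri_mat_cheb_vec:
  assumes "n \<ge> 3" and "cheb_T (n - 2) c = c * cheb_T (n - 1) c"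
  shows "eigenvector (tri_mat n a b) (cheb_vec n c) (a + 2 * b * c)"
proof -
  have "cheb_vec n c $ 0 = 1" using assms(1) by (simp add: cheb_vec_def)
  then have "cheb_vec n c \<noteq> 0\<^sub>v n" using assms(1) by auto
  then show ?thesis
    unfolding eigenvector_def
    using tri_mat_mult_cheb_vec[OF assms] by (simp add: tri_mat_def cheb_vec_def)
qed

lemma poly_prod_list_linear_eq_0:
  "poly (\<Prod>a\<leftarrow>as. [:- a, 1:]) (y :: 'a :: idom) = 0 \<Longrightarrow> y \<in> set as"
  by (induction as) auto

lemma char_poly_eq_prod_eigenvalues:
  fixes A :: "complex mat"
  assumes A: "A \<in> carrier_mat n n" and card: "card E = n"
    and eigenvalues: "\<And>e. e \<in> E \<Longrightarrow> eigenvalue A e"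
  shows "char_poly A = (\<Prod>e\<in>E. [:- e, 1:])"
proof -
  obtain as where cp: "char_poly A = (\<Prod>a\<leftarrow>as. [:- a, 1:])" and len: "length as = n"
    using char_poly_factorized[OF A] by blast
  have sub: "E \<subseteq> set as"
    using eigenvalues eigenvalue_root_char_poly[OF A] poly_prod_list_linear_eq_0
    unfolding cp by blast
  have "n \<le> card (set as)" using card_mono[OF _ sub] card by simp
  then have distinct: "distinct as"
    using card_distinct card_length len le_antisym by metis
  then have "card (set as) = n" using distinct_card len by blast
  then have "E = set as" using card_subset_eq[OF _ sub] card by simp
  then show ?thesis using cp prod.distinct_set_conv_list[OF distinct] by metis
qed

lemma inj_on_tri_lambda:
  assumes n: "n \<ge> 3" and b: "b \<noteq> 0"
  shows "inj_on (tri_lambda n a b) {1..n}"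
proof
  fix k l assume k: "k \<in> {1..n}" and l: "l \<in> {1..n}"
    and eq: "tri_lambda n a b k = tri_lambda n a b l"
  let ?t = "\<lambda>k. real (k - 1) * pi / real (n - 1)"
  have "cos (?t k) = cos (?t l)"
    using eq b unfolding tri_lambda_def by simp
  moreover have "0 \<le> ?t k" "?t k \<le> pi" "0 \<le> ?t l" "?t l \<le> pi"
    using k l n by (auto simp: field_simps)
  ultimately have "?t k = ?t l" using cos_inj_pi by blast
  then have "k - 1 = l - 1" using n by (simp add: field_simps)
  then show "k = l" using k l by simp arith
qed

lemma sin_angle_tri_lambda:
  "n \<ge> 2 \<Longrightarrow> sin (real (n - 1) * (real (k - 1) * pi / real (n - 1))) = 0"
  by (simp add: sin_zero_iff_int2)

theorem theorem1:
  fixes n :: nat and a b :: complex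
  assumes "n \<ge> 3" and "b \<noteq> 0"
  shows "char_poly (tri_mat n a b) = (\<Prod>k\<in>{1..n}. [: - tri_lambda n a b k, 1 :])
         \<and> (\<forall>j\<in>{1..n}. eigenvector (tri_mat n a b) (tri_evec n a b j) (tri_lambda n a b j))"
proof
  show evs: "\<forall>j\<in>{1..n}. eigenvector (tri_mat n a b) (tri_evec n a b j) (tri_lambda n a b j)"
  proof
    fix j
    define t where "t = real (j - 1) * pi / real (n - 1)"
    define c where "c = complex_of_real (cos t)"
    have lambda: "tri_lambda n a b j = a + 2 * b * c"
      unfolding tri_lambda_def c_def t_def by simp
    then have d: "(tri_lambda n a b j - a) / b / 2 = c"
      using assms(2) by simp
    have "tri_evec n a b j = cheb_vec n c"
      unfolding tri_evec_def cheb_vec_def Let_def d ..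
    moreover have "cheb_T (n - 2) (cos t) = cos t * cheb_T (n - 1) (cos t)"
      using cheb_T_pred_cos[of "n - 1" t] sin_angle_tri_lambda assms(1)
      by (simp add: t_def numeral_2_eq_2)
    then have "cheb_T (n - 2) c = c * cheb_T (n - 1) c"
      unfolding c_def cheb_T_of_real by (metis of_real_mult)
    ultimately show "eigenvector (tri_mat n a b) (tri_evec n a b j) (tri_lambda n a b j)"
      using eigenvector_tri_mat_cheb_vec assms(1) lambda by simp
  qed
  have "char_poly (tri_mat n a b) = (\<Prod>e\<in>tri_lambda n a b ` {1..n}. [:- e, 1:])"
    using evs card_image[OF inj_on_tri_lambda[OF assms]]
    by (intro char_poly_eq_prod_eigenvalues[OF tri_mat_carrier]) (auto simp: eigenvalue_def)
  then show "char_poly (tri_mat n a b) = (\<Prod>k\<in>{1..n}. [: - tri_lambda n a b k, 1 :])"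
    using prod.reindex[OF inj_on_tri_lambda[OF assms], of "\<lambda>e. [:- e, 1:]"] by (simp add: o_def)
qed

end
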